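(* Let $d\ge1$ and $L\ge2$ be integers, $\alpha\ge0$, $\delta\ge 0$, and let $W_1,\dots,W_{L-1}\in\mathbb{R}^{d\times d}$ satisfy $\|W_l\|_2\le\alpha$ for $l=1,\dots,L-1$ and $\|W_{l+1}^\intercal W_{l+1}-W_lW_l^\intercal\|_2\le\delta$ for $l=1,\dots,L-2$. Then $$\left\|W_{L-1:1}W_{L-1:1}^\intercal-\left(W_{L-1}W_{L-1}^\intercal\right)^{L-1}\right\|_2\le\frac12L^2\alpha^{2(L-2)}\delta.$$
   Context: $W_{L-1:1}=W_{L-1}W_{L-2}\cdots W_1$. $\|\cdot\|_2$ denotes the spectral (operator $\ell_2$) norm of a matrix. *)

theory Defs
  imports "HOL-Analysis.Analysis"
begin

definition spec_norm :: "real^'n^'n \<Rightarrow> real" where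
  "spec_norm A = onorm (\<lambda>x. A *v x)"

fun mprod :: "(nat \<Rightarrow> real^'n^'n) \<Rightarrow> nat \<Rightarrow> real^'n^'n" where
  "mprod W 0 = mat 1"
| "mprod W (Suc k) = W (Suc k) ** mprod W k"

fun mpow :: "real^'n^'n \<Rightarrow> nat \<Rightarrow> real^'n^'n" where
  "mpow A 0 = mat 1"
| "mpow A (Suc k) = A ** mpow A k"

end

theory Submission
  imports Defs
begin

text \<open>
  Let G_k = W_{k:1} W_{k:1}^T and B_k = W_k W_k^T. Since G_{k+1} = W_{k+1} G_k W_{k+1}^T and
  B_{k+1}^{k+1} = W_{k+1} (W_{k+1}^T W_{k+1})^k W_{k+1}^T, the deviation G_{k+1} - B_{k+1}^{k+1} is
  the conjugate by W_{k+1} of (G_k - B_k^k) + (B_k^k - (W_{k+1}^T W_{k+1})^k). Balancedness makes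
  the last term small: telescoping the difference of k-th powers bounds it by k alpha^{2(k-1)} delta.
  Conjugation scales norms by at most alpha^2, so the deviations obey a recursion whose solution is
  k(k-1)/2 alpha^{2(k-1)} delta.
\<close>

lemma spec_norm_nonneg: "0 \<le> spec_norm A"
  unfolding spec_norm_def by (simp add: onorm_pos_le)

lemma norm_matrix_vector_mult_le: "norm (A *v x) \<le> spec_norm A * norm x"
  unfolding spec_norm_def using onorm[of "\<lambda>x. A *v x"] by simp

lemma spec_norm_le:
  assumes "0 \<le> b" "\<And>x. norm (A *v x) \<le> b * norm x"
  shows "spec_norm A \<le> b"
  unfolding spec_norm_def by (rule onorm_bound[OF assms])

lemma spec_norm_zero [simp]: "spec_norm 0 = 0"
  by (rule antisym[OF spec_norm_le spec_norm_nonneg]) simp_all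

lemma spec_norm_mat_1: "spec_norm (mat 1) \<le> 1"
  by (rule spec_norm_le) simp_all

lemma spec_norm_mult: "spec_norm (A ** B) \<le> spec_norm A * spec_norm B"
proof -
  have "(\<lambda>x. (A ** B) *v x) = (\<lambda>x. A *v x) \<circ> (\<lambda>x. B *v x)"
    by (simp add: fun_eq_iff matrix_vector_mul_assoc)
  then show ?thesis
    unfolding spec_norm_def by (simp add: onorm_compose)
qed

lemma spec_norm_add: "spec_norm (A + B) \<le> spec_norm A + spec_norm B"
  unfolding spec_norm_def matrix_vector_mult_add_rdistrib by (simp add: onorm_triangle)

lemma spec_norm_uminus: "spec_norm (- A) = spec_norm A"
proof -
  have "(\<lambda>x. (- A) *v x) = (\<lambda>x. - (A *v x))"
    by (simp add: fun_eq_iff vec_eq_iff matrix_vector_mult_def sum_negf)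
  then show ?thesis
    unfolding spec_norm_def using onorm_neg[of "\<lambda>x. A *v x"] by simp
qed

lemma spec_norm_minus_commute: "spec_norm (A - B) = spec_norm (B - A)"
  by (metis minus_diff_eq spec_norm_uminus)

lemma spec_norm_transpose_le: "spec_norm (transpose A) \<le> spec_norm A"
proof (rule spec_norm_le[OF spec_norm_nonneg])
  fix x
  let ?y = "transpose A *v x"
  have "norm ?y ^ 2 = x \<bullet> (A *v ?y)"
    by (simp add: power2_norm_eq_inner dot_lmul_matrix)
  also have "\<dots> \<le> norm x * (spec_norm A * norm ?y)"
    by (rule order_trans[OF norm_cauchy_schwarz mult_left_mono[OF norm_matrix_vector_mult_le norm_ge_zero]])
  finally have "norm ?y * norm ?y \<le> (spec_norm A * norm x) * norm ?y"
    by (simp add: power2_eq_square algebra_simps)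
  then show "norm ?y \<le> spec_norm A * norm x"
    by (cases "norm ?y = 0") (simp_all add: spec_norm_nonneg)
qed

lemma spec_norm_transpose: "spec_norm (transpose A) = spec_norm A"
  using spec_norm_transpose_le[of A] spec_norm_transpose_le[of "transpose A"] by simp

lemma spec_norm_conj_le:
  assumes "spec_norm V \<le> a"
  shows "spec_norm (V ** D ** transpose V) \<le> a\<^sup>2 * spec_norm D"
proof -
  have "spec_norm (V ** D ** transpose V) \<le> spec_norm (V ** D) * spec_norm V"
    using spec_norm_mult[of "V ** D" "transpose V"] by (simp add: spec_norm_transpose)
  also have "\<dots> \<le> spec_norm V * spec_norm D * spec_norm V"
    by (intro mult_right_mono spec_norm_mult spec_norm_nonneg)
  also have "\<dots> \<le> a * spec_norm D * a"
    using assms spec_norm_nonneg[of V] spec_norm_nonneg[of D] by (intro mult_mono mult_right_mono) auto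
  finally show ?thesis
    by (simp add: power2_eq_square algebra_simps)
qed

lemma spec_norm_gram_le:
  assumes "spec_norm A \<le> a"
  shows "spec_norm (A ** transpose A) \<le> a\<^sup>2" and "spec_norm (transpose A ** A) \<le> a\<^sup>2"
proof -
  have "spec_norm A * spec_norm A \<le> a\<^sup>2"
    using assms spec_norm_nonneg[of A] unfolding power2_eq_square by (intro mult_mono) auto
  then show "spec_norm (A ** transpose A) \<le> a\<^sup>2" and "spec_norm (transpose A ** A) \<le> a\<^sup>2"
    using spec_norm_mult[of A "transpose A"] spec_norm_mult[of "transpose A" A]
    by (simp_all add: spec_norm_transpose)
qed

lemma matrix_diff_ldistrib: "A ** (B - C) = A ** B - A ** (C :: real^'n^'n)"
  by (simp add: matrix_eq matrix_vector_mul_assoc[symmetric] matrix_vector_mult_diff_distrib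
      matrix_vector_mult_diff_rdistrib)

lemma matrix_diff_rdistrib: "(B - C) ** A = B ** A - C ** (A :: real^'n^'n)"
  by (simp add: matrix_eq matrix_vector_mul_assoc[symmetric] matrix_vector_mult_diff_rdistrib)

lemma spec_norm_mpow_le:
  assumes "spec_norm A \<le> a"
  shows "spec_norm (mpow A k) \<le> a ^ k"
proof (induction k)
  case 0
  then show ?case by (simp add: spec_norm_mat_1)
next
  case (Suc k)
  have "spec_norm (mpow A (Suc k)) \<le> spec_norm A * spec_norm (mpow A k)"
    by (simp add: spec_norm_mult)
  also have "\<dots> \<le> a * a ^ k"
    using assms Suc.IH spec_norm_nonneg[of A] spec_norm_nonneg[of "mpow A k"] by (intro mult_mono) auto
  finally show ?case by simp
qed

lemma spec_norm_mpow_diff_le: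
  assumes "spec_norm A \<le> a" "spec_norm B \<le> a"
  shows "spec_norm (mpow B (Suc k) - mpow A (Suc k)) \<le> real (Suc k) * a ^ k * spec_norm (B - A)"
proof (induction k)
  case 0
  then show ?case by simp
next
  case (Suc k)
  have "mpow B (Suc (Suc k)) - mpow A (Suc (Suc k))
      = B ** (mpow B (Suc k) - mpow A (Suc k)) + (B - A) ** mpow A (Suc k)"
    by (simp add: matrix_diff_ldistrib matrix_diff_rdistrib)
  then have "spec_norm (mpow B (Suc (Suc k)) - mpow A (Suc (Suc k)))
      \<le> spec_norm (B ** (mpow B (Suc k) - mpow A (Suc k))) + spec_norm ((B - A) ** mpow A (Suc k))"
    by (simp only: spec_norm_add)
  also have "\<dots> \<le> spec_norm B * spec_norm (mpow B (Suc k) - mpow A (Suc k))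
        + spec_norm (B - A) * spec_norm (mpow A (Suc k))"
    by (intro add_mono spec_norm_mult)
  also have "\<dots> \<le> a * (real (Suc k) * a ^ k * spec_norm (B - A)) + spec_norm (B - A) * a ^ Suc k"
    using assms Suc.IH spec_norm_mpow_le[OF assms(1), of "Suc k"]
      spec_norm_nonneg[of B] spec_norm_nonneg[of "B - A"] spec_norm_nonneg[of "mpow B (Suc k) - mpow A (Suc k)"]
    by (intro add_mono mult_mono mult_left_mono) auto
  also have "\<dots> = real (Suc (Suc k)) * a ^ Suc k * spec_norm (B - A)"
    by (simp add: algebra_simps)
  finally show ?case .
qed

lemma mpow_Suc_outer_gram:
  "mpow (V ** transpose V) (Suc k) = V ** mpow (transpose V ** V) k ** transpose V"
proof (induction k)
  case 0
  then show ?case by simp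
next
  case (Suc k)
  then show ?case by (simp add: matrix_mul_assoc)
qed

lemma mprod_gram_Suc:
  "mprod W (Suc k) ** transpose (mprod W (Suc k))
    = W (Suc k) ** (mprod W k ** transpose (mprod W k)) ** transpose (W (Suc k))"
  by (simp add: matrix_transpose_mul matrix_mul_assoc)

lemma spec_norm_gram_deviation_step:
  assumes V: "spec_norm V \<le> a" and U: "spec_norm U \<le> a"
    and balanced: "spec_norm (transpose V ** V - U ** transpose U) \<le> d"
  shows "spec_norm (V ** G ** transpose V - mpow (V ** transpose V) (Suc (Suc k)))
    \<le> a\<^sup>2 * (spec_norm (G - mpow (U ** transpose U) (Suc k)) + real (Suc k) * a ^ (2 * k) * d)"
proof -
  let ?D = "G - mpow (U ** transpose U) (Suc k)"
  let ?E = "mpow (U ** transpose U) (Suc k) - mpow (transpose V ** V) (Suc k)"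
  have split: "V ** G ** transpose V - mpow (V ** transpose V) (Suc (Suc k))
      = V ** ?D ** transpose V + V ** ?E ** transpose V"
    unfolding mpow_Suc_outer_gram matrix_diff_ldistrib matrix_diff_rdistrib by simp
  have "spec_norm ?E \<le> real (Suc k) * (a\<^sup>2) ^ k * spec_norm (U ** transpose U - transpose V ** V)"
    by (rule spec_norm_mpow_diff_le[OF spec_norm_gram_le(2)[OF V] spec_norm_gram_le(1)[OF U]])
  also have "\<dots> \<le> real (Suc k) * a ^ (2 * k) * d"
    using balanced by (simp add: spec_norm_minus_commute power_mult mult_left_mono)
  finally have E: "spec_norm ?E \<le> real (Suc k) * a ^ (2 * k) * d" .
  have "spec_norm (V ** ?D ** transpose V + V ** ?E ** transpose V)
      \<le> a\<^sup>2 * spec_norm ?D + a\<^sup>2 * spec_norm ?E"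
    by (rule order_trans[OF spec_norm_add add_mono[OF spec_norm_conj_le[OF V] spec_norm_conj_le[OF V]]])
  also have "\<dots> \<le> a\<^sup>2 * (spec_norm ?D + real (Suc k) * a ^ (2 * k) * d)"
    unfolding distrib_left using E by (intro add_left_mono mult_left_mono) simp_all
  finally show ?thesis
    unfolding split .
qed

lemma spec_norm_gram_mprod_deviation:
  assumes "\<And>l. 1 \<le> l \<Longrightarrow> l \<le> Suc m \<Longrightarrow> spec_norm (W l) \<le> a"
    and "\<And>l. 1 \<le> l \<Longrightarrow> l \<le> m \<Longrightarrow>
           spec_norm (transpose (W (l+1)) ** W (l+1) - W l ** transpose (W l)) \<le> d"
  shows "spec_norm (mprod W (Suc m) ** transpose (mprod W (Suc m))
           - mpow (W (Suc m) ** transpose (W (Suc m))) (Suc m))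
         \<le> real (Suc m * m) / 2 * a ^ (2 * m) * d"
  using assms
proof (induction m)
  case 0
  then show ?case by simp
next
  case (Suc m)
  let ?G = "mprod W (Suc m) ** transpose (mprod W (Suc m))"
  have IH: "spec_norm (?G - mpow (W (Suc m) ** transpose (W (Suc m))) (Suc m))
      \<le> real (Suc m * m) / 2 * a ^ (2 * m) * d"
    using Suc.prems by (intro Suc.IH) simp_all
  have "spec_norm (W (Suc (Suc m)) ** ?G ** transpose (W (Suc (Suc m)))
           - mpow (W (Suc (Suc m)) ** transpose (W (Suc (Suc m)))) (Suc (Suc m)))
      \<le> a\<^sup>2 * (spec_norm (?G - mpow (W (Suc m) ** transpose (W (Suc m))) (Suc m))
               + real (Suc m) * a ^ (2 * m) * d)"
    using Suc.prems(1)[of "Suc (Suc m)"] Suc.prems(1)[of "Suc m"] Suc.prems(2)[of "Suc m"]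
    by (intro spec_norm_gram_deviation_step) simp_all
  also have "\<dots> \<le> a\<^sup>2 * (real (Suc m * m) / 2 * a ^ (2 * m) * d + real (Suc m) * a ^ (2 * m) * d)"
    using IH by (simp add: mult_left_mono)
  also have "\<dots> = real (Suc (Suc m) * Suc m) / 2 * a ^ (2 * Suc m) * d"
    by (simp add: field_simps power_add[symmetric])
  finally show ?case
    unfolding mprod_gram_Suc .
qed

theorem lemma5:
  fixes W :: "nat \<Rightarrow> real^'n^'n" and L :: nat and \<alpha> \<delta> :: real
  assumes "L \<ge> 2" and "\<alpha> \<ge> 0" and "\<delta> \<ge> 0"
    and "\<And>l. 1 \<le> l \<Longrightarrow> l \<le> L - 1 \<Longrightarrow> spec_norm (W l) \<le> \<alpha>"
    and "\<And>l. 1 \<le> l \<Longrightarrow> l \<le> L - 2 \<Longrightarrow>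
           spec_norm (transpose (W (l+1)) ** W (l+1) - W l ** transpose (W l)) \<le> \<delta>"
  shows "spec_norm (mprod W (L-1) ** transpose (mprod W (L-1))
           - mpow (W (L-1) ** transpose (W (L-1))) (L-1))
         \<le> 1/2 * real L ^ 2 * \<alpha> ^ (2*(L-2)) * \<delta>"
proof -
  define m where "m = L - 2"
  have L: "L - 1 = Suc m" "L - 2 = m"
    using assms(1) by (simp_all add: m_def)
  have "spec_norm (mprod W (Suc m) ** transpose (mprod W (Suc m))
           - mpow (W (Suc m) ** transpose (W (Suc m))) (Suc m))
        \<le> real (Suc m * m) / 2 * \<alpha> ^ (2 * m) * \<delta>"
    using assms(4,5) unfolding L by (rule spec_norm_gram_mprod_deviation)
  also have "\<dots> \<le> 1/2 * real L ^ 2 * \<alpha> ^ (2 * m) * \<delta>"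
  proof -
    have "Suc m * m \<le> L * L"
      using L by (intro mult_le_mono) auto
    then have "real (Suc m * m) / 2 \<le> 1/2 * real L ^ 2"
      by (simp add: power2_eq_square flip: of_nat_mult)
    then show ?thesis
      using assms(2,3) by (intro mult_right_mono) simp_all
  qed
  finally show ?thesis
    unfolding L .
qed

end
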